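(* Let $g$ be a $C^1$ function near $0\in\mathbb{C}$ with $g(0)=0$, $g_z(0)=0$, $g_{\bar z}(0)=1$, such that $z^2$ and $g^2$ separate points near $0$. Let $G$ be holomorphic near the origin of $\mathbb{C}^2$ with $G(0,0)=0$, and let $F(w_1,w_2)=w_2G(w_1^2,w_2^2)$. Then for every closed disk $D$ centered at $0$ with sufficiently small radius, $$[\,z^2,\ (g+F(z,g))^2\,;\,D\,]=[\,z^2,\ g^2\,;\,D\,],$$ where $(g+F(z,g))(z)=g(z)+F(z,g(z))$.
   Context: For continuous functions $f_1,f_2$ on a compact set $D\subset\mathbb{C}$, $[f_1,f_2;D]$ denotes the uniform closure in $C(D)$ of the set of polynomials (with complex coefficients) in $f_1$ and $f_2$. *)

theory Defs
  imports "HOL-Analysis.Analysis"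
begin

text \<open>Real (Frechet) C^1 regularity of a map complex => complex on a neighbourhood of 0.
  The derivative at z is a real-linear map determined by its values at 1 and i,
  so continuity of these two partial derivatives is continuity of the derivative.\<close>
definition C1_near_0 :: "(complex \<Rightarrow> complex) \<Rightarrow> bool" where
  "C1_near_0 g \<longleftrightarrow> (\<exists>U g'. open U \<and> 0 \<in> U \<and>
      (\<forall>z\<in>U. (g has_derivative g' z) (at z)) \<and>
      continuous_on U (\<lambda>z. g' z 1) \<and> continuous_on U (\<lambda>z. g' z \<i>))"

definition wirt_z :: "(complex \<Rightarrow> complex) \<Rightarrow> complex \<Rightarrow> complex" where
  "wirt_z g z = (frechet_derivative g (at z) 1 - \<i> * frechet_derivative g (at z) \<i>) / 2"

definition wirt_zbar :: "(complex \<Rightarrow> complex) \<Rightarrow> complex \<Rightarrow> complex" where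
  "wirt_zbar g z = (frechet_derivative g (at z) 1 + \<i> * frechet_derivative g (at z) \<i>) / 2"

definition separate_points_near_0 :: "(complex \<Rightarrow> complex) \<Rightarrow> (complex \<Rightarrow> complex) \<Rightarrow> bool" where
  "separate_points_near_0 f1 f2 \<longleftrightarrow> (\<exists>U. open U \<and> 0 \<in> U \<and>
      (\<forall>z\<in>U. \<forall>w\<in>U. z \<noteq> w \<longrightarrow> (f1 z, f2 z) \<noteq> (f1 w, f2 w)))"

definition holomorphic2_near_0 :: "(complex \<times> complex \<Rightarrow> complex) \<Rightarrow> bool" where
  "holomorphic2_near_0 G \<longleftrightarrow> (\<exists>U. open U \<and> (0,0) \<in> U \<and>
      (\<forall>p\<in>U. \<exists>L. (G has_derivative L) (at p) \<and>
          (\<forall>c a b. L (c * a, c * b) = c * L (a, b))))"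

definition polys2 :: "(complex \<Rightarrow> complex) \<Rightarrow> (complex \<Rightarrow> complex) \<Rightarrow> (complex \<Rightarrow> complex) set" where
  "polys2 f1 f2 = {P. \<exists>S c. finite S \<and>
      P = (\<lambda>z. \<Sum>(i,j)\<in>S. c (i,j) * f1 z ^ i * f2 z ^ j)}"

text \<open>[f1,f2;D]: uniform closure in C(D) of the polynomials in f1, f2. Functions are
  total on complex; membership only depends on the restriction to D.\<close>
definition unif_alg :: "(complex \<Rightarrow> complex) \<Rightarrow> (complex \<Rightarrow> complex) \<Rightarrow> complex set \<Rightarrow> (complex \<Rightarrow> complex) set" where
  "unif_alg f1 f2 D = {h. continuous_on D h \<and>
      (\<forall>e>0. \<exists>P\<in>polys2 f1 f2. \<forall>z\<in>D. norm (h z - P z) < e)}"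

end

theory Submission
  imports Defs "HOL-Complex_Analysis.Complex_Analysis"
begin

(* Write u = g^2 and h = (g + F(z, g))^2 = u (1 + G(z^2, u))^2. Polynomials in z^2 and u
   approximate G(z^2, u) uniformly, since G is uniformly approximable by polynomials on a small
   bidisc (truncate the geometric expansion of the kernel in the iterated Cauchy formula); hence
   h lies in [z^2, u; D]. Conversely u is the fixed point of y |-> h - y ((1 + G(z^2, y))^2 - 1),
   a contraction near 0 by the Cauchy estimates because G(0, 0) = 0. The Picard iterates starting
   at 0 are built from z^2 and h by the same functional calculus, so they lie in [z^2, h; D] and
   converge uniformly to u. *)

section \<open>Polynomials in two functions\<close>

definition poly2 :: "(nat \<times> nat) set \<Rightarrow> (nat \<times> nat \<Rightarrow> complex) \<Rightarrow> complex \<Rightarrow> complex \<Rightarrow> complex" where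
  "poly2 S c x y = (\<Sum>p\<in>S. c p * x ^ fst p * y ^ snd p)"

lemma polys2_iff: "P \<in> polys2 f1 f2 \<longleftrightarrow> (\<exists>S c. finite S \<and> P = (\<lambda>z. poly2 S c (f1 z) (f2 z)))"
  unfolding polys2_def poly2_def by (simp add: split_def)

lemma polys2I: "finite S \<Longrightarrow> (\<lambda>z. poly2 S c (f1 z) (f2 z)) \<in> polys2 f1 f2"
  unfolding polys2_iff by blast

lemma polys2_indexed_sum:
  assumes "finite I"
  shows "(\<lambda>z. \<Sum>i\<in>I. a i * f1 z ^ fst (e i) * f2 z ^ snd (e i)) \<in> polys2 f1 f2"
proof -
  define c where "c p = (\<Sum>i\<in>{i \<in> I. e i = p}. a i)" for p
  have "(\<Sum>i\<in>I. a i * f1 z ^ fst (e i) * f2 z ^ snd (e i)) = poly2 (e ` I) c (f1 z) (f2 z)" for z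
  proof -
    have "(\<Sum>i\<in>I. a i * f1 z ^ fst (e i) * f2 z ^ snd (e i))
        = (\<Sum>p\<in>e ` I. \<Sum>i\<in>{i \<in> I. e i = p}. a i * f1 z ^ fst (e i) * f2 z ^ snd (e i))"
      by (rule sum.group[symmetric]) (use assms in auto)
    then show ?thesis
      unfolding poly2_def c_def sum_distrib_right by (auto intro!: sum.cong)
  qed
  then show ?thesis using polys2I[of "e ` I" c f1 f2] assms by simp
qed

lemma polys2_const: "(\<lambda>z. c) \<in> polys2 f1 f2"
  using polys2I[of "{(0,0)}" "\<lambda>_. c" f1 f2] by (simp add: poly2_def)

lemma polys2_gen1: "f1 \<in> polys2 f1 f2"
  using polys2I[of "{(1,0)}" "\<lambda>_. 1" f1 f2] by (simp add: poly2_def)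

lemma polys2_gen2: "f2 \<in> polys2 f1 f2"
  using polys2I[of "{(0,1)}" "\<lambda>_. 1" f1 f2] by (simp add: poly2_def)

lemma polys2_add:
  assumes "P \<in> polys2 f1 f2" "Q \<in> polys2 f1 f2"
  shows "(\<lambda>z. P z + Q z) \<in> polys2 f1 f2"
proof -
  obtain S c T d where "finite S" "finite T"
    and "P = (\<lambda>z. poly2 S c (f1 z) (f2 z))" "Q = (\<lambda>z. poly2 T d (f1 z) (f2 z))"
    using assms unfolding polys2_iff by blast
  then show ?thesis
    using polys2_indexed_sum[where I = "S <+> T" and a = "case_sum c d" and e = "case_sum id id"]
    by (simp add: sum.Plus poly2_def comp_def)
qed

lemma polys2_mult:
  assumes "P \<in> polys2 f1 f2" "Q \<in> polys2 f1 f2"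
  shows "(\<lambda>z. P z * Q z) \<in> polys2 f1 f2"
proof -
  obtain S c T d where "finite S" "finite T"
    and "P = (\<lambda>z. poly2 S c (f1 z) (f2 z))" "Q = (\<lambda>z. poly2 T d (f1 z) (f2 z))"
    using assms unfolding polys2_iff by blast
  moreover have "poly2 S c x y * poly2 T d x y
      = (\<Sum>(p,q)\<in>S \<times> T. (c p * d q) * x ^ (fst p + fst q) * y ^ (snd p + snd q))" for x y
    by (simp add: poly2_def sum_product sum.cartesian_product power_add mult_ac)
  ultimately show ?thesis
    using polys2_indexed_sum[where I = "S \<times> T" and a = "\<lambda>(p,q). c p * d q"
        and e = "\<lambda>(p,q). (fst p + fst q, snd p + snd q)"]
    by (simp add: split_def)
qed

definition poly2_approximable :: "real \<Rightarrow> (complex \<times> complex \<Rightarrow> complex) \<Rightarrow> bool" where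
  "poly2_approximable \<rho> Q \<longleftrightarrow> (\<forall>e>0. \<exists>S c. finite S \<and>
      (\<forall>w1 w2. norm w1 \<le> \<rho> \<longrightarrow> norm w2 \<le> \<rho> \<longrightarrow> norm (Q (w1, w2) - poly2 S c w1 w2) < e))"

section \<open>The uniform algebra generated by two functions\<close>

lemma unif_alg_continuous_on: "h \<in> unif_alg f1 f2 D \<Longrightarrow> continuous_on D h"
  unfolding unif_alg_def by blast

lemma unif_alg_uniform_limit:
  assumes "h \<in> unif_alg f1 f2 D"
  obtains P where "\<And>n. P n \<in> polys2 f1 f2" "uniform_limit D P h sequentially"
proof -
  have "\<forall>n. \<exists>P. P \<in> polys2 f1 f2 \<and> (\<forall>z\<in>D. norm (h z - P z) < 1 / Suc n)"
  proof
    fix n :: nat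
    have "(1::real) / Suc n > 0" by simp
    then show "\<exists>P. P \<in> polys2 f1 f2 \<and> (\<forall>z\<in>D. norm (h z - P z) < 1 / Suc n)"
      using assms unfolding unif_alg_def by blast
  qed
  from choice[OF this] obtain P
    where P: "\<And>n. P n \<in> polys2 f1 f2" "\<And>n z. z \<in> D \<Longrightarrow> norm (h z - P n z) < 1 / Suc n"
    by blast
  have "uniform_limit D P h sequentially"
  proof (rule uniform_limitI)
    fix e :: real assume "e > 0"
    then obtain N where N: "1 / Suc N < e" using nat_approx_posE by blast
    have "dist (P n z) (h z) < e" if "n \<ge> N" "z \<in> D" for n z
    proof -
      have "1 / Suc n \<le> 1 / Suc N" using that(1) by (intro divide_left_mono) auto
      moreover have "dist (P n z) (h z) = norm (h z - P n z)"
        by (simp add: dist_norm norm_minus_commute)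
      ultimately show ?thesis using P(2)[OF that(2), of n] N by linarith
    qed
    then show "\<forall>\<^sub>F n in sequentially. \<forall>z\<in>D. dist (P n z) (h z) < e"
      by (intro eventually_sequentiallyI[of N]) simp
  qed
  with P(1) show ?thesis using that by blast
qed

lemma unif_alg_of_uniform_limit:
  assumes "continuous_on D h" "\<And>n. P n \<in> polys2 f1 f2" "uniform_limit D P h sequentially"
  shows "h \<in> unif_alg f1 f2 D"
  unfolding unif_alg_def
proof (intro CollectI conjI allI impI assms(1))
  fix e :: real assume "e > 0"
  obtain n where "\<forall>z\<in>D. dist (P n z) (h z) < e"
    using uniform_limitD[OF assms(3) \<open>e > 0\<close>] unfolding eventually_sequentially by blast
  then show "\<exists>Q\<in>polys2 f1 f2. \<forall>z\<in>D. norm (h z - Q z) < e"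
    using assms(2)[of n] by (metis dist_norm dist_commute)
qed

lemma unif_alg_closed:
  assumes "continuous_on D h"
    and "\<And>e. e > 0 \<Longrightarrow> \<exists>k\<in>unif_alg f1 f2 D. \<forall>z\<in>D. norm (h z - k z) < e"
  shows "h \<in> unif_alg f1 f2 D"
  unfolding unif_alg_def
proof (intro CollectI conjI allI impI assms(1))
  fix e :: real assume "e > 0"
  then obtain k where k: "k \<in> unif_alg f1 f2 D" "\<forall>z\<in>D. norm (h z - k z) < e/2"
    using assms(2)[of "e/2"] by auto
  moreover have "e/2 > 0" using \<open>e > 0\<close> by simp
  ultimately obtain P where P: "P \<in> polys2 f1 f2" "\<forall>z\<in>D. norm (k z - P z) < e/2"
    unfolding unif_alg_def by blast
  have "norm (h z - P z) < e/2 + e/2" if "z \<in> D" for z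
    by (rule norm_diff_triangle_less) (use k(2) P(2) that in auto)
  then show "\<exists>P\<in>polys2 f1 f2. \<forall>z\<in>D. norm (h z - P z) < e" using P(1) by auto
qed

lemma unif_alg_of_polys2: "continuous_on D P \<Longrightarrow> P \<in> polys2 f1 f2 \<Longrightarrow> P \<in> unif_alg f1 f2 D"
  unfolding unif_alg_def by (auto intro!: bexI[of _ P])

lemma unif_alg_const: "(\<lambda>z. c) \<in> unif_alg f1 f2 D"
  by (simp add: unif_alg_of_polys2 polys2_const)

lemma unif_alg_gen1: "continuous_on D f1 \<Longrightarrow> f1 \<in> unif_alg f1 f2 D"
  by (simp add: unif_alg_of_polys2 polys2_gen1)

lemma unif_alg_gen2: "continuous_on D f2 \<Longrightarrow> f2 \<in> unif_alg f1 f2 D"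
  by (simp add: unif_alg_of_polys2 polys2_gen2)

lemma unif_alg_add:
  assumes "a \<in> unif_alg f1 f2 D" "b \<in> unif_alg f1 f2 D"
  shows "(\<lambda>z. a z + b z) \<in> unif_alg f1 f2 D"
proof -
  obtain P where P: "\<And>n. P n \<in> polys2 f1 f2" "uniform_limit D P a sequentially"
    using unif_alg_uniform_limit[OF assms(1)] by blast
  obtain Q where Q: "\<And>n. Q n \<in> polys2 f1 f2" "uniform_limit D Q b sequentially"
    using unif_alg_uniform_limit[OF assms(2)] by blast
  show ?thesis
  proof (rule unif_alg_of_uniform_limit)
    show "continuous_on D (\<lambda>z. a z + b z)"
      using assms by (simp add: continuous_on_add unif_alg_continuous_on)
    show "(\<lambda>z. P n z + Q n z) \<in> polys2 f1 f2" for n by (rule polys2_add[OF P(1) Q(1)])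
    show "uniform_limit D (\<lambda>n z. P n z + Q n z) (\<lambda>z. a z + b z) sequentially"
      by (rule uniform_limit_add[OF P(2) Q(2)])
  qed
qed

lemma unif_alg_mult:
  assumes "compact D" "a \<in> unif_alg f1 f2 D" "b \<in> unif_alg f1 f2 D"
  shows "(\<lambda>z. a z * b z) \<in> unif_alg f1 f2 D"
proof -
  obtain P where P: "\<And>n. P n \<in> polys2 f1 f2" "uniform_limit D P a sequentially"
    using unif_alg_uniform_limit[OF assms(2)] by blast
  obtain Q where Q: "\<And>n. Q n \<in> polys2 f1 f2" "uniform_limit D Q b sequentially"
    using unif_alg_uniform_limit[OF assms(3)] by blast
  have "continuous_on D a" "continuous_on D b"
    using assms(2,3) by (auto intro: unif_alg_continuous_on)
  show ?thesis
  proof (rule unif_alg_of_uniform_limit)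
    show "continuous_on D (\<lambda>z. a z * b z)"
      using \<open>continuous_on D a\<close> \<open>continuous_on D b\<close> by (rule continuous_on_mult)
    show "(\<lambda>z. P n z * Q n z) \<in> polys2 f1 f2" for n by (rule polys2_mult[OF P(1) Q(1)])
    have "bounded (a ` D)" "bounded (b ` D)"
      using \<open>compact D\<close> \<open>continuous_on D a\<close> \<open>continuous_on D b\<close>
      by (auto intro: compact_imp_bounded compact_continuous_image)
    then show "uniform_limit D (\<lambda>n z. P n z * Q n z) (\<lambda>z. a z * b z) sequentially"
      by (intro uniform_lim_mult P(2) Q(2))
  qed
qed

lemma unif_alg_diff:
  assumes "compact D" "a \<in> unif_alg f1 f2 D" "b \<in> unif_alg f1 f2 D"
  shows "(\<lambda>z. a z - b z) \<in> unif_alg f1 f2 D"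
  using unif_alg_add[OF assms(2) unif_alg_mult[OF assms(1) unif_alg_const assms(3)], of "-1"] by simp

lemma unif_alg_power:
  assumes "compact D" "a \<in> unif_alg f1 f2 D"
  shows "(\<lambda>z. a z ^ n) \<in> unif_alg f1 f2 D"
  by (induction n) (simp_all add: unif_alg_const unif_alg_mult[OF assms])

lemma unif_alg_poly2:
  assumes "compact D" "u1 \<in> unif_alg f1 f2 D" "u2 \<in> unif_alg f1 f2 D" "finite S"
  shows "(\<lambda>z. poly2 S c (u1 z) (u2 z)) \<in> unif_alg f1 f2 D"
  using assms(4) unfolding poly2_def
proof (induction S rule: finite_induct)
  case empty then show ?case by (simp add: unif_alg_const)
next
  case (insert p S)
  have "(\<lambda>z. c p * u1 z ^ fst p * u2 z ^ snd p) \<in> unif_alg f1 f2 D"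
    using assms(1-3) by (intro unif_alg_mult unif_alg_power unif_alg_const)
  from unif_alg_add[OF this insert.IH] show ?case
    using insert.hyps by simp
qed

lemma unif_alg_subset:
  assumes "compact D" "u1 \<in> unif_alg f1 f2 D" "u2 \<in> unif_alg f1 f2 D"
  shows "unif_alg u1 u2 D \<subseteq> unif_alg f1 f2 D"
proof
  fix h assume h: "h \<in> unif_alg u1 u2 D"
  show "h \<in> unif_alg f1 f2 D"
  proof (rule unif_alg_closed)
    show "continuous_on D h" using h by (rule unif_alg_continuous_on)
    fix e :: real assume "e > 0"
    then obtain P where "P \<in> polys2 u1 u2" "\<forall>z\<in>D. norm (h z - P z) < e"
      using h unfolding unif_alg_def by blast
    moreover from this(1) obtain S c where "finite S" "P = (\<lambda>z. poly2 S c (u1 z) (u2 z))"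
      unfolding polys2_iff by blast
    ultimately show "\<exists>k\<in>unif_alg f1 f2 D. \<forall>z\<in>D. norm (h z - k z) < e"
      using unif_alg_poly2[OF assms, of S c] by (intro bexI[of _ P]) auto
  qed
qed

lemma unif_alg_compose:
  assumes "compact D" "u1 \<in> unif_alg f1 f2 D" "u2 \<in> unif_alg f1 f2 D"
    and bounded: "\<forall>z\<in>D. norm (u1 z) \<le> \<rho> \<and> norm (u2 z) \<le> \<rho>"
    and "continuous_on (cball 0 \<rho> \<times> cball 0 \<rho>) Q"
    and approx: "poly2_approximable \<rho> Q"
  shows "(\<lambda>z. Q (u1 z, u2 z)) \<in> unif_alg f1 f2 D"
proof (rule unif_alg_closed)
  have "continuous_on D (\<lambda>z. (u1 z, u2 z))"
    using assms(2,3) by (simp add: continuous_on_Pair unif_alg_continuous_on)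
  then show "continuous_on D (\<lambda>z. Q (u1 z, u2 z))"
    using bounded by (intro continuous_on_compose2[OF assms(5)]) auto
  fix e :: real assume "e > 0"
  then obtain S c where S: "finite S"
    and "\<forall>w1 w2. norm w1 \<le> \<rho> \<longrightarrow> norm w2 \<le> \<rho> \<longrightarrow> norm (Q (w1, w2) - poly2 S c w1 w2) < e"
    using approx unfolding poly2_approximable_def by blast
  then have "\<forall>z\<in>D. norm (Q (u1 z, u2 z) - poly2 S c (u1 z) (u2 z)) < e"
    using bounded by blast
  then show "\<exists>k\<in>unif_alg f1 f2 D. \<forall>z\<in>D. norm (Q (u1 z, u2 z) - k z) < e"
    using unif_alg_poly2[OF assms(1-3) S, of c] by (intro bexI) auto
qed

section \<open>Iterated Cauchy integrals over a torus\<close>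

definition sep_holomorphic_bidisc :: "real \<Rightarrow> (complex \<times> complex \<Rightarrow> complex) \<Rightarrow> bool" where
  "sep_holomorphic_bidisc R G \<longleftrightarrow> continuous_on (cball 0 R \<times> cball 0 R) G \<and>
     (\<forall>b\<in>cball 0 R. (\<lambda>x. G (x, b)) holomorphic_on ball 0 R) \<and>
     (\<forall>a\<in>cball 0 R. (\<lambda>y. G (a, y)) holomorphic_on ball 0 R)"

definition continuous_on_torus :: "real \<Rightarrow> (complex \<Rightarrow> complex \<Rightarrow> complex) \<Rightarrow> bool" where
  "continuous_on_torus R H \<longleftrightarrow> continuous_on (sphere 0 R \<times> sphere 0 R) (\<lambda>p. H (fst p) (snd p))"

definition torus_integral :: "real \<Rightarrow> (complex \<Rightarrow> complex \<Rightarrow> complex) \<Rightarrow> complex" where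
  "torus_integral R H = contour_integral (circlepath 0 R) (\<lambda>x. contour_integral (circlepath 0 R) (H x))"

lemma continuous_on_contour_integral_circlepath:
  fixes H :: "'a::topological_space \<Rightarrow> complex \<Rightarrow> complex"
  assumes "continuous_on (S \<times> sphere 0 R) (\<lambda>p. H (fst p) (snd p))" "0 \<le> R"
  shows "continuous_on S (\<lambda>x. contour_integral (circlepath 0 R) (H x))"
proof -
  define \<gamma> where "\<gamma> t = R * exp (2 * of_real pi * \<i> * of_real t)" for t :: real
  have eq: "contour_integral (circlepath 0 R) (H x) =
      integral (cbox 0 1) (\<lambda>t. H x (\<gamma> t) * (2 * pi * \<i> * \<gamma> t))" for x
    unfolding contour_integral_integral vector_derivative_circlepath \<gamma>_def
    by (simp add: circlepath cbox_interval mult_ac)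
  have "continuous_on (S \<times> cbox 0 1) (\<lambda>p. (fst p, \<gamma> (snd p)))"
    unfolding \<gamma>_def by (intro continuous_intros)
  moreover have "(\<lambda>p. (fst p, \<gamma> (snd p))) ` (S \<times> cbox 0 1) \<subseteq> S \<times> sphere 0 R"
    using assms(2) by (auto simp: \<gamma>_def norm_mult)
  ultimately have "continuous_on (S \<times> cbox 0 1) (\<lambda>p. H (fst p) (\<gamma> (snd p)))"
    using continuous_on_compose2[OF assms(1)] by fastforce
  then have "continuous_on (S \<times> cbox 0 1) (\<lambda>p. H (fst p) (\<gamma> (snd p)) * (2 * pi * \<i> * \<gamma> (snd p)))"
    unfolding \<gamma>_def by (intro continuous_intros)
  then show ?thesis
    unfolding eq by (intro integral_continuous_on_param) (simp add: split_def)
qed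

lemma
  assumes "continuous_on_torus R H" "0 \<le> R"
  shows torus_inner_integrable:
      "x \<in> sphere 0 R \<Longrightarrow> H x contour_integrable_on circlepath 0 R"
    and torus_outer_integrable:
      "(\<lambda>x. contour_integral (circlepath 0 R) (H x)) contour_integrable_on circlepath 0 R"
proof -
  assume x: "x \<in> sphere 0 R"
  have "continuous_on (sphere 0 R) (\<lambda>y. (x, y))" by (intro continuous_intros)
  moreover have "(\<lambda>y. (x, y)) ` sphere 0 R \<subseteq> sphere 0 R \<times> sphere 0 R" using x by auto
  ultimately have "continuous_on (sphere 0 R) (H x)"
    using continuous_on_compose2[OF assms(1)[unfolded continuous_on_torus_def]] by fastforce
  then show "H x contour_integrable_on circlepath 0 R"
    using assms(2) by (intro contour_integrable_continuous_circlepath) auto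
next
  show "(\<lambda>x. contour_integral (circlepath 0 R) (H x)) contour_integrable_on circlepath 0 R"
    using continuous_on_contour_integral_circlepath[of "sphere 0 R" R H] assms
    by (intro contour_integrable_continuous_circlepath) (auto simp: continuous_on_torus_def)
qed

lemma torus_integral_lincomb:
  assumes "finite T" "0 \<le> R" "\<And>p. p \<in> T \<Longrightarrow> continuous_on_torus R (H p)"
  shows "torus_integral R (\<lambda>x y. \<Sum>p\<in>T. a p * H p x y) = (\<Sum>p\<in>T. a p * torus_integral R (H p))"
proof -
  have "torus_integral R (\<lambda>x y. \<Sum>p\<in>T. a p * H p x y) =
      contour_integral (circlepath 0 R) (\<lambda>x. \<Sum>p\<in>T. a p * contour_integral (circlepath 0 R) (H p x))"
    unfolding torus_integral_def
  proof (rule contour_integral_cong[OF refl])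
    fix x assume "x \<in> path_image (circlepath 0 R)"
    then have "x \<in> sphere 0 R" using assms(2) by (simp add: path_image_circlepath_nonneg)
    then show "contour_integral (circlepath 0 R) (\<lambda>y. \<Sum>p\<in>T. a p * H p x y) =
        (\<Sum>p\<in>T. a p * contour_integral (circlepath 0 R) (H p x))"
      using assms by (simp add: contour_integral_sum contour_integral_lmul contour_integrable_lmul
          torus_inner_integrable)
  qed
  also have "\<dots> = (\<Sum>p\<in>T. a p * torus_integral R (H p))"
    unfolding torus_integral_def
    using assms by (simp add: contour_integral_sum contour_integral_lmul contour_integrable_lmul
        torus_outer_integrable)
  finally show ?thesis .
qed

lemma torus_integral_diff:
  assumes "0 \<le> R" "continuous_on_torus R H1" "continuous_on_torus R H2"
  shows "torus_integral R (\<lambda>x y. H1 x y - H2 x y) = torus_integral R H1 - torus_integral R H2"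
proof -
  have "torus_integral R (\<lambda>x y. H1 x y - H2 x y) = contour_integral (circlepath 0 R)
      (\<lambda>x. contour_integral (circlepath 0 R) (H1 x) - contour_integral (circlepath 0 R) (H2 x))"
    unfolding torus_integral_def
  proof (rule contour_integral_cong[OF refl])
    fix x assume "x \<in> path_image (circlepath 0 R)"
    then have "x \<in> sphere 0 R" using assms(1) by (simp add: path_image_circlepath_nonneg)
    then show "contour_integral (circlepath 0 R) (\<lambda>y. H1 x y - H2 x y) =
        contour_integral (circlepath 0 R) (H1 x) - contour_integral (circlepath 0 R) (H2 x)"
      using assms by (intro contour_integral_diff torus_inner_integrable)
  qed
  also have "\<dots> = torus_integral R H1 - torus_integral R H2"
    unfolding torus_integral_def using assms by (intro contour_integral_diff torus_outer_integrable)
  finally show ?thesis .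
qed

lemma torus_integral_bound:
  assumes "continuous_on_torus R H" "0 < R" "0 \<le> B"
    and "\<And>x y. x \<in> sphere 0 R \<Longrightarrow> y \<in> sphere 0 R \<Longrightarrow> norm (H x y) \<le> B"
  shows "norm (torus_integral R H) \<le> B * (2 * pi * R) * (2 * pi * R)"
  unfolding torus_integral_def
proof (rule has_contour_integral_bound_circlepath[OF has_contour_integral_integral])
  show "(\<lambda>x. contour_integral (circlepath 0 R) (H x)) contour_integrable_on circlepath 0 R"
    using assms(1,2) by (intro torus_outer_integrable) auto
  fix x :: complex assume "norm (x - 0) = R"
  then show "norm (contour_integral (circlepath 0 R) (H x)) \<le> B * (2 * pi * R)"
    using assms
    by (intro has_contour_integral_bound_circlepath[OF has_contour_integral_integral]
        torus_inner_integrable) auto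
qed (use assms in auto)

lemma torus_integral_Cauchy:
  assumes G: "sep_holomorphic_bidisc R G" and w: "norm w1 < R" "norm w2 < R"
  shows "torus_integral R (\<lambda>x y. G (x, y) / ((x - w1) * (y - w2))) = (2 * pi * \<i>) ^ 2 * G (w1, w2)"
proof -
  have contG: "continuous_on (cball 0 R \<times> cball 0 R) G"
    and hol1: "\<And>b. b \<in> cball 0 R \<Longrightarrow> (\<lambda>x. G (x, b)) holomorphic_on ball 0 R"
    and hol2: "\<And>a. a \<in> cball 0 R \<Longrightarrow> (\<lambda>y. G (a, y)) holomorphic_on ball 0 R"
    using G unfolding sep_holomorphic_bidisc_def by auto
  have cont1: "continuous_on (cball 0 R) (\<lambda>x. G (x, b))" and cont2: "continuous_on (cball 0 R) (\<lambda>y. G (b, y))"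
    if "b \<in> cball 0 R" for b
    using that by (auto intro!: continuous_on_compose2[OF contG] continuous_on_Pair)
  have inner: "contour_integral (circlepath 0 R) (\<lambda>y. G (x, y) / ((x - w1) * (y - w2)))
      = 2 * pi * \<i> * G (x, w2) / (x - w1)" if "x \<in> sphere 0 R" for x
  proof -
    have "x \<in> cball 0 R" using that by auto
    from Cauchy_integral_circlepath[OF cont2[OF this] hol2[OF this], of w2]
    have "((\<lambda>y. G (x, y) / (y - w2)) has_contour_integral (2 * pi * \<i> * G (x, w2))) (circlepath 0 R)"
      using w by simp
    from has_contour_integral_div[OF this, of "x - w1"] show ?thesis
      by (intro contour_integral_unique) (simp add: divide_divide_eq_left mult.commute)
  qed
  have "torus_integral R (\<lambda>x y. G (x, y) / ((x - w1) * (y - w2))) =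
      contour_integral (circlepath 0 R) (\<lambda>x. 2 * pi * \<i> * G (x, w2) / (x - w1))"
    unfolding torus_integral_def
  proof (intro contour_integral_cong refl inner)
    show "x \<in> sphere 0 R" if "x \<in> path_image (circlepath 0 R)" for x
      using that w norm_ge_zero[of w1] by (simp add: path_image_circlepath_nonneg)
  qed
  also have "\<dots> = (2 * pi * \<i>) ^ 2 * G (w1, w2)"
  proof (rule contour_integral_unique)
    have "w2 \<in> cball 0 R" using w by auto
    then have "continuous_on (cball 0 R) (\<lambda>x. 2 * pi * \<i> * G (x, w2))"
      and "(\<lambda>x. 2 * pi * \<i> * G (x, w2)) holomorphic_on ball 0 R"
      using cont1 hol1 by (auto intro!: continuous_intros holomorphic_intros)
    from Cauchy_integral_circlepath[OF this, of w1]
    show "((\<lambda>x. 2 * pi * \<i> * G (x, w2) / (x - w1)) has_contour_integral (2 * pi * \<i>) ^ 2 * G (w1, w2))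
        (circlepath 0 R)"
      using w by (simp add: power2_eq_square mult.assoc)
  qed
  finally show ?thesis .
qed

section \<open>Polynomial approximation on a bidisc\<close>

lemma norm_mult_diff_le:
  fixes a b a' b' :: "'a::real_normed_algebra"
  shows "norm (a * b - a' * b') \<le> norm a * norm (b - b') + norm (a - a') * norm b'"
proof -
  have "a * b - a' * b' = a * (b - b') + (a - a') * b'" by (simp add: algebra_simps)
  then show ?thesis
    by (metis norm_triangle_le add_mono norm_mult_ineq)
qed

lemma
  fixes z w :: complex
  assumes "norm z = R" "norm w \<le> R / 2" "R > 0"
  shows norm_Cauchy_kernel_le: "norm (1 / (z - w)) \<le> 2 / R"
    and norm_Cauchy_kernel_truncation_le:
      "norm (1 / (z - w) - (\<Sum>j<N. w ^ j / z ^ (j + 1))) \<le> (1/2) ^ N * (2 / R)"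
proof -
  have "norm (z - w) \<ge> R / 2" using norm_triangle_ineq2[of z w] assms by linarith
  then show kernel: "norm (1 / (z - w)) \<le> 2 / R"
    using assms(3) by (simp add: norm_divide divide_simps)
  have "z \<noteq> 0" "z \<noteq> w" using assms \<open>norm (z - w) \<ge> R / 2\<close> by auto
  then have "w / z \<noteq> 1" by (auto simp: field_simps)
  have "(\<Sum>j<N. w ^ j / z ^ (j + 1)) = (\<Sum>j<N. (w / z) ^ j) / z"
    by (simp add: sum_divide_distrib power_divide mult.commute)
  also have "\<dots> = (1 - (w / z) ^ N) / (1 - w / z) / z"
    using \<open>w / z \<noteq> 1\<close> by (simp only: sum_gp_strict if_False)
  also have "\<dots> = (1 - (w / z) ^ N) / (z - w)"
    using \<open>z \<noteq> 0\<close> \<open>z \<noteq> w\<close> by (simp add: field_simps)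
  finally have eq: "1 / (z - w) - (\<Sum>j<N. w ^ j / z ^ (j + 1)) = (w / z) ^ N * (1 / (z - w))"
    by (simp add: diff_divide_distrib[symmetric])
  have "norm ((w / z) ^ N) \<le> (1/2) ^ N"
    unfolding norm_power using assms by (intro power_mono) (auto simp: norm_divide divide_simps)
  then have "norm ((w / z) ^ N * (1 / (z - w))) \<le> (1/2) ^ N * (2 / R)"
    using kernel unfolding norm_mult by (intro mult_mono) auto
  then show "norm (1 / (z - w) - (\<Sum>j<N. w ^ j / z ^ (j + 1))) \<le> (1/2) ^ N * (2 / R)"
    unfolding eq .
qed

lemma norm_Cauchy_kernel2_truncation_le:
  fixes z1 z2 w1 w2 :: complex
  assumes "norm z1 = R" "norm z2 = R" "norm w1 \<le> R / 2" "norm w2 \<le> R / 2" "R > 0"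
  shows "norm (1 / ((z1 - w1) * (z2 - w2))
      - (\<Sum>j<N. w1 ^ j / z1 ^ (j + 1)) * (\<Sum>k<N. w2 ^ k / z2 ^ (k + 1))) \<le> 12 * (1/2) ^ N / R\<^sup>2"
proof -
  let ?a = "1 / (z1 - w1)" and ?b = "1 / (z2 - w2)"
  let ?a' = "\<Sum>j<N. w1 ^ j / z1 ^ (j + 1)" and ?b' = "\<Sum>k<N. w2 ^ k / z2 ^ (k + 1)"
  have a: "norm ?a \<le> 2 / R" "norm (?a - ?a') \<le> (1/2) ^ N * (2 / R)"
    using norm_Cauchy_kernel_le[OF assms(1,3,5)] norm_Cauchy_kernel_truncation_le[OF assms(1,3,5)]
    by auto
  have b: "norm ?b \<le> 2 / R" "norm (?b - ?b') \<le> (1/2) ^ N * (2 / R)"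
    using norm_Cauchy_kernel_le[OF assms(2,4,5)] norm_Cauchy_kernel_truncation_le[OF assms(2,4,5)]
    by auto
  have "(1/2::real) ^ N * (2 / R) \<le> 2 / R"
    using assms(5) by (intro mult_left_le_one_le) (auto simp: power_le_one)
  moreover have "norm ?b' \<le> norm ?b + norm (?b - ?b')"
    using norm_triangle_sub[of ?b' ?b] by (simp add: norm_minus_commute)
  ultimately have "norm ?b' \<le> 4 / R" using b by simp
  have "norm (?a * ?b - ?a' * ?b') \<le> norm ?a * norm (?b - ?b') + norm (?a - ?a') * norm ?b'"
    by (rule norm_mult_diff_le)
  also have "\<dots> \<le> (2 / R) * ((1/2) ^ N * (2 / R)) + ((1/2) ^ N * (2 / R)) * (4 / R)"
    using a b \<open>norm ?b' \<le> 4 / R\<close> assms(5) by (intro add_mono mult_mono) auto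
  also have "\<dots> = 12 * (1/2) ^ N / R\<^sup>2"
    by (simp add: field_simps power2_eq_square)
  finally show ?thesis by simp
qed

lemma continuous_on_torus_mult_sep_holomorphic:
  assumes "sep_holomorphic_bidisc R G" "continuous_on_torus R H"
  shows "continuous_on_torus R (\<lambda>x y. G (x, y) * H x y)"
proof -
  have "continuous_on (sphere 0 R \<times> sphere 0 R) G"
    using assms(1) unfolding sep_holomorphic_bidisc_def by (auto elim: continuous_on_subset)
  then show ?thesis
    using assms(2) unfolding continuous_on_torus_def by (intro continuous_intros) auto
qed

definition Cauchy_coeff2 :: "real \<Rightarrow> (complex \<times> complex \<Rightarrow> complex) \<Rightarrow> nat \<times> nat \<Rightarrow> complex" where
  "Cauchy_coeff2 R G p =
     torus_integral R (\<lambda>x y. G (x, y) * (1 / (x ^ (fst p + 1) * y ^ (snd p + 1)))) / (2 * pi * \<i>) ^ 2"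

lemma sep_holomorphic_bidisc_Taylor_remainder:
  assumes G: "sep_holomorphic_bidisc R G" and "R > 0" and w: "norm w1 \<le> R / 2" "norm w2 \<le> R / 2"
  shows "G (w1, w2) - poly2 ({..<N} \<times> {..<N}) (Cauchy_coeff2 R G) w1 w2
    = torus_integral R (\<lambda>x y. G (x, y) * (1 / ((x - w1) * (y - w2))
        - (\<Sum>j<N. w1 ^ j / x ^ (j + 1)) * (\<Sum>k<N. w2 ^ k / y ^ (k + 1)))) / (2 * pi * \<i>) ^ 2"
proof -
  define T where "T = {..<N} \<times> {..<N}"
  define H where "H p x y = G (x, y) * (1 / (x ^ (fst p + 1) * y ^ (snd p + 1)))" for p x y
  define K where "K x y = 1 / ((x - w1) * (y - w2))" for x y
  define KN where "KN x y = (\<Sum>j<N. w1 ^ j / x ^ (j + 1)) * (\<Sum>k<N. w2 ^ k / y ^ (k + 1))" for x y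
  have "continuous_on_torus R K" "continuous_on_torus R KN"
    unfolding continuous_on_torus_def K_def KN_def using w \<open>R > 0\<close>
    by (auto intro!: continuous_intros)
  have expand: "(\<lambda>x y. G (x, y) * KN x y) = (\<lambda>x y. \<Sum>p\<in>T. (w1 ^ fst p * w2 ^ snd p) * H p x y)"
  proof (intro ext)
    fix x y
    have "KN x y = (\<Sum>p\<in>T. (w1 ^ fst p / x ^ (fst p + 1)) * (w2 ^ snd p / y ^ (snd p + 1)))"
      unfolding KN_def T_def by (simp add: sum_product sum.cartesian_product split_def)
    then show "G (x, y) * KN x y = (\<Sum>p\<in>T. (w1 ^ fst p * w2 ^ snd p) * H p x y)"
      by (simp add: sum_distrib_left H_def mult_ac)
  qed
  have "torus_integral R (\<lambda>x y. G (x, y) * KN x y)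
      = (\<Sum>p\<in>T. (w1 ^ fst p * w2 ^ snd p) * torus_integral R (H p))"
    unfolding expand unfolding H_def using \<open>R > 0\<close>
    by (intro torus_integral_lincomb continuous_on_torus_mult_sep_holomorphic[OF G])
      (auto simp: T_def continuous_on_torus_def intro!: continuous_intros)
  also have "\<dots> = poly2 T (Cauchy_coeff2 R G) w1 w2 * (2 * pi * \<i>) ^ 2"
    unfolding poly2_def Cauchy_coeff2_def H_def sum_distrib_right by (simp add: mult_ac)
  finally have "poly2 T (Cauchy_coeff2 R G) w1 w2
      = torus_integral R (\<lambda>x y. G (x, y) * KN x y) / (2 * pi * \<i>) ^ 2"
    by simp
  moreover have "G (w1, w2) = torus_integral R (\<lambda>x y. G (x, y) * K x y) / (2 * pi * \<i>) ^ 2"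
    using torus_integral_Cauchy[OF G, of w1 w2] w \<open>R > 0\<close> by (simp add: K_def)
  moreover have "torus_integral R (\<lambda>x y. G (x, y) * K x y - G (x, y) * KN x y)
      = torus_integral R (\<lambda>x y. G (x, y) * K x y) - torus_integral R (\<lambda>x y. G (x, y) * KN x y)"
    using \<open>R > 0\<close> \<open>continuous_on_torus R K\<close> \<open>continuous_on_torus R KN\<close>
    by (intro torus_integral_diff continuous_on_torus_mult_sep_holomorphic[OF G]) auto
  ultimately show ?thesis
    unfolding T_def K_def KN_def by (simp add: right_diff_distrib diff_divide_distrib)
qed

lemma sep_holomorphic_bidisc_poly2_approximable:
  assumes G: "sep_holomorphic_bidisc R G" and "R > 0"
  shows "poly2_approximable (R / 2) G"
  unfolding poly2_approximable_def
proof (intro allI impI)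
  fix e :: real assume "e > 0"
  have contG: "continuous_on (cball 0 R \<times> cball 0 R) G"
    using G unfolding sep_holomorphic_bidisc_def by blast
  obtain M where "M > 0" and M: "\<And>p. p \<in> cball 0 R \<times> cball 0 R \<Longrightarrow> norm (G p) \<le> M"
    using compact_imp_bounded[OF compact_continuous_image[OF contG compact_Times[OF compact_cball compact_cball]]]
    unfolding bounded_pos by auto
  obtain N where N: "(1/2::real) ^ N < e / (12 * M)"
    using real_arch_pow_inv[of "e / (12 * M)" "1/2"] \<open>e > 0\<close> \<open>M > 0\<close> by auto
  have "norm (G (w1, w2) - poly2 ({..<N} \<times> {..<N}) (Cauchy_coeff2 R G) w1 w2) < e"
    if w: "norm w1 \<le> R / 2" "norm w2 \<le> R / 2" for w1 w2
  proof -
    define E where "E = (\<lambda>x y. G (x, y) * (1 / ((x - w1) * (y - w2))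
        - (\<Sum>j<N. w1 ^ j / x ^ (j + 1)) * (\<Sum>k<N. w2 ^ k / y ^ (k + 1))))"
    have bound: "norm (torus_integral R E) \<le> (M * (12 * (1/2) ^ N / R\<^sup>2)) * (2 * pi * R) * (2 * pi * R)"
    proof (rule torus_integral_bound)
      show "continuous_on_torus R E"
        unfolding E_def using w \<open>R > 0\<close>
        by (intro continuous_on_torus_mult_sep_holomorphic[OF G])
          (auto simp: continuous_on_torus_def intro!: continuous_intros)
      fix x y :: complex assume "x \<in> sphere 0 R" "y \<in> sphere 0 R"
      then show "norm (E x y) \<le> M * (12 * (1/2) ^ N / R\<^sup>2)"
        unfolding norm_mult E_def using w \<open>R > 0\<close> \<open>M > 0\<close>
        by (intro mult_mono M norm_Cauchy_kernel2_truncation_le) auto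
    qed (use \<open>R > 0\<close> \<open>M > 0\<close> in auto)
    have "norm (G (w1, w2) - poly2 ({..<N} \<times> {..<N}) (Cauchy_coeff2 R G) w1 w2)
        = norm (torus_integral R E) / (4 * pi\<^sup>2)"
      unfolding sep_holomorphic_bidisc_Taylor_remainder[OF G \<open>R > 0\<close> w] E_def
      by (simp add: norm_divide norm_mult power2_eq_square)
    also have "\<dots> \<le> (M * (12 * (1/2) ^ N / R\<^sup>2)) * (2 * pi * R) * (2 * pi * R) / (4 * pi\<^sup>2)"
      by (rule divide_right_mono[OF bound]) simp
    also have "\<dots> = 12 * M * (1/2) ^ N"
      using \<open>R > 0\<close> by (simp add: field_simps power2_eq_square)
    also have "\<dots> < e" using N \<open>M > 0\<close> by (simp add: field_simps)
    finally show ?thesis .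
  qed
  then show "\<exists>S c. finite S \<and> (\<forall>w1 w2. norm w1 \<le> R / 2 \<longrightarrow> norm w2 \<le> R / 2 \<longrightarrow>
      norm (G (w1, w2) - poly2 S c w1 w2) < e)"
    by (intro exI[of _ "{..<N} \<times> {..<N}"] exI[of _ "Cauchy_coeff2 R G"]) auto
qed

section \<open>Holomorphic functions of two variables near the origin\<close>

lemma has_field_derivative_slices:
  fixes G :: "complex \<times> complex \<Rightarrow> complex"
  assumes "(G has_derivative L) (at (a, b))" and linear: "\<And>c x y. L (c * x, c * y) = c * L (x, y)"
  shows "((\<lambda>x. G (x, b)) has_field_derivative L (1, 0)) (at a)"
    and "((\<lambda>y. G (a, y)) has_field_derivative L (0, 1)) (at b)"
proof -
  have "((\<lambda>x. (x, b)) has_derivative (\<lambda>h. (h, 0))) (at a)"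
    by (auto intro!: derivative_eq_intros)
  from has_derivative_compose[OF this assms(1)]
  have "((\<lambda>x. G (x, b)) has_derivative (\<lambda>h. L (h, 0))) (at a)" by simp
  moreover have "(\<lambda>h. L (h, 0)) = (\<lambda>h. L (1, 0) * h)"
  proof (rule ext)
    show "L (h, 0) = L (1, 0) * h" for h using linear[of h 1 0] by (simp add: mult.commute)
  qed
  ultimately show "((\<lambda>x. G (x, b)) has_field_derivative L (1, 0)) (at a)"
    unfolding has_field_derivative_def by simp
  have "((\<lambda>y. (a, y)) has_derivative (\<lambda>h. (0, h))) (at b)"
    by (auto intro!: derivative_eq_intros)
  from has_derivative_compose[OF this assms(1)]
  have "((\<lambda>y. G (a, y)) has_derivative (\<lambda>h. L (0, h))) (at b)" by simp
  moreover have "(\<lambda>h. L (0, h)) = (\<lambda>h. L (0, 1) * h)"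
  proof (rule ext)
    show "L (0, h) = L (0, 1) * h" for h using linear[of h 0 1] by (simp add: mult.commute)
  qed
  ultimately show "((\<lambda>y. G (a, y)) has_field_derivative L (0, 1)) (at b)"
    unfolding has_field_derivative_def by simp
qed

lemma holomorphic2_near_0_imp_sep_holomorphic_bidisc:
  assumes "holomorphic2_near_0 G"
  obtains R where "R > 0" "sep_holomorphic_bidisc R G"
proof -
  obtain U where "open U" "(0, 0) \<in> U"
    and diff: "\<And>p. p \<in> U \<Longrightarrow> \<exists>L. (G has_derivative L) (at p) \<and> (\<forall>c a b. L (c * a, c * b) = c * L (a, b))"
    using assms unfolding holomorphic2_near_0_def by blast
  then obtain \<epsilon> where "\<epsilon> > 0" "ball (0, 0) \<epsilon> \<subseteq> U" using open_contains_ball by blast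
  define R where "R = \<epsilon> / 3"
  have "R > 0" using \<open>\<epsilon> > 0\<close> by (simp add: R_def)
  have sub: "cball 0 R \<times> cball 0 R \<subseteq> U"
  proof
    fix p :: "complex \<times> complex" assume "p \<in> cball 0 R \<times> cball 0 R"
    then obtain x y where "p = (x, y)" "norm x \<le> R" "norm y \<le> R" by auto
    then have "dist p (0, 0) < \<epsilon>"
      using norm_Pair_le[of x y] \<open>R > 0\<close> by (simp add: R_def dist_norm)
    then show "p \<in> U" using \<open>ball (0, 0) \<epsilon> \<subseteq> U\<close> by (auto simp: dist_commute)
  qed
  have "continuous_on U G"
  proof (rule continuous_at_imp_continuous_on, rule ballI)
    fix p assume "p \<in> U"
    then obtain L where "(G has_derivative L) (at p)" using diff by blast
    then show "isCont G p" by (rule has_derivative_continuous)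
  qed
  moreover have "(\<lambda>x. G (x, b)) field_differentiable at a" "(\<lambda>y. G (a, y)) field_differentiable at b"
    if ab: "a \<in> cball 0 R" "b \<in> cball 0 R" for a b
  proof -
    obtain L where "(G has_derivative L) (at (a, b))" "\<And>c x y. L (c * x, c * y) = c * L (x, y)"
      using diff[of "(a, b)"] sub ab by blast
    from has_field_derivative_slices[OF this]
    show "(\<lambda>x. G (x, b)) field_differentiable at a" "(\<lambda>y. G (a, y)) field_differentiable at b"
      unfolding field_differentiable_def by blast+
  qed
  ultimately have "sep_holomorphic_bidisc R G"
    unfolding sep_holomorphic_bidisc_def holomorphic_on_def
    using continuous_on_subset[OF _ sub] field_differentiable_at_within
    by (metis mem_ball_0 mem_cball_0 less_imp_le)
  with \<open>R > 0\<close> show ?thesis using that by blast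
qed

lemma sep_holomorphic_bidisc_shifted_square:
  assumes "sep_holomorphic_bidisc R G"
  shows "sep_holomorphic_bidisc R (\<lambda>p. (1 + G p)\<^sup>2 - 1)"
  using assms unfolding sep_holomorphic_bidisc_def
  by (auto intro!: continuous_on_diff continuous_on_power continuous_on_add
      holomorphic_on_diff holomorphic_on_power holomorphic_on_add)

lemma holomorphic_on_ball_Lipschitz:
  assumes hol: "\<phi> holomorphic_on ball 0 R" and "\<delta> > 0" "2 * \<delta> < R"
    and bound: "\<And>t. norm t \<le> 2 * \<delta> \<Longrightarrow> norm (\<phi> t) \<le> M"
    and "norm x \<le> \<delta>" "norm y \<le> \<delta>"
  shows "norm (\<phi> x - \<phi> y) \<le> M / \<delta> * norm (x - y)"
proof (rule field_differentiable_bound[where S = "cball 0 \<delta>" and f' = "deriv \<phi>"])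
  fix z :: complex assume "z \<in> cball 0 \<delta>"
  then have z: "norm z \<le> \<delta>" by simp
  have sub: "cball z \<delta> \<subseteq> ball 0 R"
  proof
    fix t assume "t \<in> cball z \<delta>"
    then have "norm t \<le> norm z + \<delta>"
      using norm_triangle_sub[of t z] by (simp add: dist_norm norm_minus_commute)
    then show "t \<in> ball 0 R" using z \<open>2 * \<delta> < R\<close> by simp
  qed
  then have "z \<in> ball 0 R" using \<open>\<delta> > 0\<close> by fastforce
  then show "(\<phi> has_field_derivative deriv \<phi> z) (at z within cball 0 \<delta>)"
    by (rule holomorphic_derivI[OF hol open_ball])
  \<comment> \<open>Cauchy's estimate on the circle of radius \<open>\<delta>\<close> about \<open>z\<close>, which lies in the disc of radius \<open>2\<delta>\<close>.\<close>
  have "norm ((deriv ^^ 1) \<phi> z) \<le> fact 1 * M / \<delta> ^ 1"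
  proof (rule Cauchy_inequality)
    show "\<phi> holomorphic_on ball z \<delta>"
      using hol sub ball_subset_cball holomorphic_on_subset by blast
    show "continuous_on (cball z \<delta>) \<phi>"
      using holomorphic_on_imp_continuous_on[OF hol] sub continuous_on_subset by blast
    fix t assume "norm (z - t) = \<delta>"
    then show "norm (\<phi> t) \<le> M"
      using norm_triangle_sub[of t z] z by (intro bound) (simp add: norm_minus_commute)
  qed (rule \<open>\<delta> > 0\<close>)
  then show "norm (deriv \<phi> z) \<le> M / \<delta>" by simp
qed (use assms in auto)

lemma sep_holomorphic_bidisc_contraction:
  assumes \<Psi>: "sep_holomorphic_bidisc R \<Psi>" and "R > 0" and "\<Psi> (0, 0) = 0"
  obtains \<delta> where "\<delta> > 0" "\<delta> \<le> R / 2"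
    "\<And>a x y. norm a \<le> \<delta> \<Longrightarrow> norm x \<le> \<delta> \<Longrightarrow> norm y \<le> \<delta> \<Longrightarrow>
       norm (x * \<Psi> (a, x) - y * \<Psi> (a, y)) \<le> 1/2 * norm (x - y)"
proof -
  have cont: "continuous_on (cball 0 R \<times> cball 0 R) \<Psi>"
    and hol: "\<And>a. a \<in> cball 0 R \<Longrightarrow> (\<lambda>y. \<Psi> (a, y)) holomorphic_on ball 0 R"
    using \<Psi> unfolding sep_holomorphic_bidisc_def by auto
  have "(0, 0) \<in> cball (0::complex) R \<times> cball (0::complex) R" using \<open>R > 0\<close> by auto
  from cont[unfolded continuous_on_iff, rule_format, OF this, of "1/4"]
  obtain d where "d > 0"
    and d: "\<forall>p\<in>cball 0 R \<times> cball 0 R. dist p (0, 0) < d \<longrightarrow> dist (\<Psi> p) (\<Psi> (0, 0)) < 1/4"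
    by auto
  define \<delta> where "\<delta> = min (d / 3) (R / 2) / 2"
  have "\<delta> > 0" "2 * \<delta> \<le> R / 2" "2 * \<delta> \<le> d / 3"
    using \<open>d > 0\<close> \<open>R > 0\<close> by (auto simp: \<delta>_def)
  have small: "norm (\<Psi> (a, t)) \<le> 1/4" if "norm a \<le> 2 * \<delta>" "norm t \<le> 2 * \<delta>" for a t
  proof -
    have "(a, t) \<in> cball 0 R \<times> cball 0 R" using that \<open>2 * \<delta> \<le> R / 2\<close> \<open>R > 0\<close> by auto
    moreover have "dist (a, t) (0, 0) < d"
      using norm_Pair_le[of a t] that \<open>2 * \<delta> \<le> d / 3\<close> \<open>d > 0\<close> by (simp add: dist_norm)
    ultimately have "dist (\<Psi> (a, t)) (\<Psi> (0, 0)) < 1/4" using d by blast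
    then show ?thesis using \<open>\<Psi> (0, 0) = 0\<close> by (simp add: dist_norm)
  qed
  show ?thesis
  proof (rule that)
    show "\<delta> > 0" "\<delta> \<le> R / 2" using \<open>\<delta> > 0\<close> \<open>2 * \<delta> \<le> R / 2\<close> by auto
  next
    fix a x y :: complex
    assume a: "norm a \<le> \<delta>" and xy: "norm x \<le> \<delta>" "norm y \<le> \<delta>"
    have "a \<in> cball 0 R" using a \<open>2 * \<delta> \<le> R / 2\<close> \<open>\<delta> > 0\<close> by auto
    then have "(\<lambda>t. t * \<Psi> (a, t)) holomorphic_on ball 0 R"
      using hol by (intro holomorphic_intros)
    moreover have "norm (t * \<Psi> (a, t)) \<le> \<delta> / 2" if "norm t \<le> 2 * \<delta>" for t
    proof -
      have "norm t * norm (\<Psi> (a, t)) \<le> 2 * \<delta> * (1/4)"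
        using small[of a t] that a \<open>\<delta> > 0\<close> by (intro mult_mono) auto
      then show ?thesis by (simp add: norm_mult)
    qed
    ultimately have "norm (x * \<Psi> (a, x) - y * \<Psi> (a, y)) \<le> (\<delta> / 2) / \<delta> * norm (x - y)"
      using \<open>\<delta> > 0\<close> \<open>2 * \<delta> \<le> R / 2\<close> \<open>R > 0\<close> xy
      by (intro holomorphic_on_ball_Lipschitz[where \<phi> = "\<lambda>t. t * \<Psi> (a, t)"]) auto
    then show "norm (x * \<Psi> (a, x) - y * \<Psi> (a, y)) \<le> 1/2 * norm (x - y)"
      using \<open>\<delta> > 0\<close> by simp
  qed
qed

section \<open>Perturbing a generator\<close>

lemma unif_alg_holomorphic_compose:
  assumes G: "sep_holomorphic_bidisc R G" and "R > 0" "compact D"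
    and "v1 \<in> unif_alg f1 f2 D" "v2 \<in> unif_alg f1 f2 D"
    and "\<forall>z\<in>D. norm (v1 z) \<le> R / 2 \<and> norm (v2 z) \<le> R / 2"
  shows "(\<lambda>z. G (v1 z, v2 z)) \<in> unif_alg f1 f2 D"
proof (rule unif_alg_compose[OF assms(3-6)])
  show "continuous_on (cball 0 (R / 2) \<times> cball 0 (R / 2)) G"
    using G \<open>R > 0\<close> unfolding sep_holomorphic_bidisc_def
    by (auto elim!: continuous_on_subset)
  show "poly2_approximable (R / 2) G"
    by (rule sep_holomorphic_bidisc_poly2_approximable[OF G \<open>R > 0\<close>])
qed

lemma unif_alg_geometric_limit:
  assumes "continuous_on D u" "\<And>n. v n \<in> unif_alg f1 f2 D"
    and "\<And>n z. z \<in> D \<Longrightarrow> norm (v n z - u z) \<le> (1/2) ^ n * B"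
  shows "u \<in> unif_alg f1 f2 D"
proof (rule unif_alg_closed[OF assms(1)])
  fix e :: real assume "e > 0"
  obtain n where n: "(1/2::real) ^ n * B < e"
  proof (cases "B > 0")
    case True
    then obtain n where "(1/2::real) ^ n < e / B"
      using real_arch_pow_inv[of "e / B" "1/2"] \<open>e > 0\<close> by auto
    then have "(1/2::real) ^ n * B < e" using True by (simp add: field_simps)
    then show ?thesis by (rule that)
  next
    case False
    then have "(1/2::real) ^ 0 * B < e" using \<open>e > 0\<close> by simp
    then show ?thesis by (rule that)
  qed
  have "norm (u z - v n z) < e" if "z \<in> D" for z
    using assms(3)[OF that, of n] n by (simp add: norm_minus_commute)
  then show "\<exists>k\<in>unif_alg f1 f2 D. \<forall>z\<in>D. norm (u z - k z) < e" using assms(2)[of n] by blast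
qed

lemma contraction_iterates_error:
  fixes \<Phi> :: "'a::real_normed_vector \<Rightarrow> 'a"
  assumes "norm u \<le> \<delta> / 2" "u = c - \<Phi> u"
    and contraction: "\<And>x y. norm x \<le> \<delta> \<Longrightarrow> norm y \<le> \<delta> \<Longrightarrow> norm (\<Phi> x - \<Phi> y) \<le> 1/2 * norm (x - y)"
  shows "norm (((\<lambda>x. c - \<Phi> x) ^^ n) 0 - u) \<le> (1/2) ^ n * norm u"
proof (induction n)
  case 0
  show ?case by simp
next
  case (Suc n)
  define x where "x = ((\<lambda>x. c - \<Phi> x) ^^ n) 0"
  have "norm x \<le> norm u + norm (x - u)" by (rule norm_triangle_sub)
  also have "\<dots> \<le> norm u + norm u"
    using Suc.IH mult_left_le_one_le[of "norm u" "(1/2) ^ n"] by (simp add: x_def power_le_one)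
  finally have "norm x \<le> \<delta>" using assms(1) by simp
  have "c = u + \<Phi> u" using assms(2) by (simp add: algebra_simps)
  then have "norm (c - \<Phi> x - u) = norm (\<Phi> u - \<Phi> x)" by (simp add: algebra_simps)
  also have "\<dots> \<le> 1/2 * norm (u - x)"
    using assms(1) norm_ge_zero[of u] by (intro contraction \<open>norm x \<le> \<delta>\<close>) linarith
  also have "\<dots> \<le> 1/2 * ((1/2) ^ n * norm u)"
    using Suc.IH by (simp add: x_def norm_minus_commute)
  finally show ?case by (simp add: x_def)
qed

lemma unif_alg_contraction_fixed_point:
  assumes "compact D" "h \<in> unif_alg f1 f2 D" "continuous_on D u"
    and u_small: "\<And>z. z \<in> D \<Longrightarrow> norm (u z) \<le> \<delta> / 2"
    and fixed_point: "\<And>z. z \<in> D \<Longrightarrow> u z = h z - \<Phi> z (u z)"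
    and contraction: "\<And>z x y. z \<in> D \<Longrightarrow> norm x \<le> \<delta> \<Longrightarrow> norm y \<le> \<delta> \<Longrightarrow>
        norm (\<Phi> z x - \<Phi> z y) \<le> 1/2 * norm (x - y)"
    and closed: "\<And>v. v \<in> unif_alg f1 f2 D \<Longrightarrow> \<forall>z\<in>D. norm (v z) \<le> \<delta> \<Longrightarrow>
        (\<lambda>z. \<Phi> z (v z)) \<in> unif_alg f1 f2 D"
  shows "u \<in> unif_alg f1 f2 D"
proof -
  define v where "v n z = ((\<lambda>x. h z - \<Phi> z x) ^^ n) 0" for n z
  have err: "norm (v n z - u z) \<le> (1/2) ^ n * norm (u z)" if "z \<in> D" for n z
    unfolding v_def
    by (rule contraction_iterates_error[OF u_small[OF that] fixed_point[OF that] contraction[OF that]])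
  have "norm (v n z) \<le> \<delta>" if "z \<in> D" for n z
  proof -
    have "norm (v n z) \<le> norm (u z) + norm (v n z - u z)" by (rule norm_triangle_sub)
    also have "\<dots> \<le> norm (u z) + norm (u z)"
      using err[OF that, of n] mult_left_le_one_le[of "norm (u z)" "(1/2) ^ n"] by (simp add: power_le_one)
    finally show ?thesis using u_small[OF that] by simp
  qed
  have "v n \<in> unif_alg f1 f2 D" for n
  proof (induction n)
    case 0
    show ?case by (simp add: v_def unif_alg_const)
  next
    case (Suc n)
    have "v (Suc n) = (\<lambda>z. h z - \<Phi> z (v n z))" by (simp add: v_def fun_eq_iff)
    also have "\<dots> \<in> unif_alg f1 f2 D"
      using \<open>\<And>z n. z \<in> D \<Longrightarrow> norm (v n z) \<le> \<delta>\<close>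
      by (intro unif_alg_diff assms(1,2) closed Suc.IH) auto
    finally show ?case .
  qed
  moreover have "norm (v n z - u z) \<le> (1/2) ^ n * \<delta>" if "z \<in> D" for n z
  proof -
    have "norm (u z) \<le> \<delta>" using u_small[OF that] norm_ge_zero[of "u z"] by linarith
    then have "(1/2) ^ n * norm (u z) \<le> (1/2) ^ n * \<delta>" by (intro mult_left_mono) auto
    with err[OF that, of n] show ?thesis by (rule order_trans)
  qed
  ultimately show ?thesis by (rule unif_alg_geometric_limit[OF \<open>continuous_on D u\<close>])
qed

lemma unif_alg_perturbed_generator:
  assumes G: "sep_holomorphic_bidisc R G" and "R > 0" "\<delta> > 0" "\<delta> \<le> R / 2"
    and contraction: "\<And>a x y. norm a \<le> \<delta> \<Longrightarrow> norm x \<le> \<delta> \<Longrightarrow> norm y \<le> \<delta> \<Longrightarrow>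
       norm (x * ((1 + G (a, x))\<^sup>2 - 1) - y * ((1 + G (a, y))\<^sup>2 - 1)) \<le> 1/2 * norm (x - y)"
    and "compact D" and f: "continuous_on D f" and u: "continuous_on D u"
    and small: "\<And>z. z \<in> D \<Longrightarrow> norm (f z) \<le> \<delta> / 2 \<and> norm (u z) \<le> \<delta> / 2"
  shows "unif_alg f (\<lambda>z. u z * (1 + G (f z, u z))\<^sup>2) D = unif_alg f u D"
proof -
  define h where "h z = u z * (1 + G (f z, u z))\<^sup>2" for z
  have G_compose: "(\<lambda>z. G (f z, v z)) \<in> unif_alg f1 f2 D"
    if "f \<in> unif_alg f1 f2 D" "v \<in> unif_alg f1 f2 D" "\<forall>z\<in>D. norm (v z) \<le> \<delta>" for f1 f2 v
  proof (rule unif_alg_holomorphic_compose[OF G \<open>R > 0\<close> \<open>compact D\<close> that(1,2)])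
    show "\<forall>z\<in>D. norm (f z) \<le> R / 2 \<and> norm (v z) \<le> R / 2"
      using small that(3) \<open>\<delta> \<le> R / 2\<close> \<open>\<delta> > 0\<close> by fastforce
  qed
  have "\<forall>z\<in>D. norm (u z) \<le> \<delta>" using small \<open>\<delta> > 0\<close> by fastforce
  then have "h \<in> unif_alg f u D"
    unfolding h_def
    by (intro unif_alg_mult unif_alg_power unif_alg_add unif_alg_const G_compose unif_alg_gen1
        unif_alg_gen2 \<open>compact D\<close> f u) auto
  then have "continuous_on D h" by (rule unif_alg_continuous_on)
  have "u \<in> unif_alg f h D"
  proof (rule unif_alg_contraction_fixed_point[where \<Phi> = "\<lambda>z y. y * ((1 + G (f z, y))\<^sup>2 - 1)"])
    show "h \<in> unif_alg f h D" by (rule unif_alg_gen2[OF \<open>continuous_on D h\<close>])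
    show "u z = h z - u z * ((1 + G (f z, u z))\<^sup>2 - 1)" for z
      by (simp add: h_def algebra_simps)
    show "norm (x * ((1 + G (f z, x))\<^sup>2 - 1) - y * ((1 + G (f z, y))\<^sup>2 - 1)) \<le> 1/2 * norm (x - y)"
      if "z \<in> D" "norm x \<le> \<delta>" "norm y \<le> \<delta>" for z x y
      by (intro contraction) (use small[OF that(1)] that \<open>\<delta> > 0\<close> in auto)
    fix v assume "v \<in> unif_alg f h D" "\<forall>z\<in>D. norm (v z) \<le> \<delta>"
    then show "(\<lambda>z. v z * ((1 + G (f z, v z))\<^sup>2 - 1)) \<in> unif_alg f h D"
      by (intro unif_alg_mult unif_alg_diff unif_alg_power unif_alg_add unif_alg_const G_compose
          unif_alg_gen1 \<open>compact D\<close> f)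
  qed (use \<open>compact D\<close> u small in auto)
  have "unif_alg f h D \<subseteq> unif_alg f u D"
    using \<open>h \<in> unif_alg f u D\<close> by (intro unif_alg_subset unif_alg_gen1 \<open>compact D\<close> f)
  moreover have "unif_alg f u D \<subseteq> unif_alg f h D"
    using \<open>u \<in> unif_alg f h D\<close> by (intro unif_alg_subset unif_alg_gen1 \<open>compact D\<close> f)
  ultimately show ?thesis unfolding h_def by blast
qed

lemma unif_alg_holomorphic_perturbation:
  fixes G :: "complex \<times> complex \<Rightarrow> complex"
  assumes "holomorphic2_near_0 G" "G (0, 0) = 0"
  obtains \<delta> where "\<delta> > 0"
    "\<And>D f u. compact D \<Longrightarrow> continuous_on D f \<Longrightarrow> continuous_on D u \<Longrightarrow>
       (\<And>z. z \<in> D \<Longrightarrow> norm (f z) \<le> \<delta> \<and> norm (u z) \<le> \<delta>) \<Longrightarrow>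
       unif_alg f (\<lambda>z. u z * (1 + G (f z, u z))\<^sup>2) D = unif_alg f u D"
proof -
  obtain R where "R > 0" and G: "sep_holomorphic_bidisc R G"
    using holomorphic2_near_0_imp_sep_holomorphic_bidisc[OF assms(1)] by blast
  obtain \<delta> where "\<delta> > 0" "\<delta> \<le> R / 2"
    and contraction: "\<And>a x y. norm a \<le> \<delta> \<Longrightarrow> norm x \<le> \<delta> \<Longrightarrow> norm y \<le> \<delta> \<Longrightarrow>
       norm (x * ((1 + G (a, x))\<^sup>2 - 1) - y * ((1 + G (a, y))\<^sup>2 - 1)) \<le> 1/2 * norm (x - y)"
    using sep_holomorphic_bidisc_contraction[OF sep_holomorphic_bidisc_shifted_square[OF G] \<open>R > 0\<close>]
      assms(2) by auto
  from unif_alg_perturbed_generator[OF G \<open>R > 0\<close> \<open>\<delta> > 0\<close> \<open>\<delta> \<le> R / 2\<close> contraction]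
  have "unif_alg f (\<lambda>z. u z * (1 + G (f z, u z))\<^sup>2) D = unif_alg f u D"
    if "compact D" "continuous_on D f" "continuous_on D u"
      "\<And>z. z \<in> D \<Longrightarrow> norm (f z) \<le> \<delta> / 2 \<and> norm (u z) \<le> \<delta> / 2" for D f u
    using that by blast
  moreover have "\<delta> / 2 > 0" using \<open>\<delta> > 0\<close> by simp
  ultimately show ?thesis using that by blast
qed

lemma C1_near_0_small_near_0:
  assumes "C1_near_0 g" "g 0 = 0" "\<delta> > 0"
  obtains r0 where "r0 > 0" "continuous_on (ball 0 r0) g"
    "\<And>z. norm z < r0 \<Longrightarrow> norm (z\<^sup>2) \<le> \<delta> \<and> norm ((g z)\<^sup>2) \<le> \<delta>"
proof -
  obtain U g' where "open U" "0 \<in> U" and "\<forall>z\<in>U. (g has_derivative g' z) (at z)"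
    using assms(1) unfolding C1_near_0_def by blast
  then have "continuous_on U g"
    by (meson continuous_at_imp_continuous_on has_derivative_continuous)
  obtain \<epsilon> where "\<epsilon> > 0" "ball 0 \<epsilon> \<subseteq> U" using \<open>open U\<close> \<open>0 \<in> U\<close> open_contains_ball by blast
  have "isCont (\<lambda>z. (g z)\<^sup>2) 0"
    using \<open>continuous_on U g\<close> \<open>open U\<close> \<open>0 \<in> U\<close> by (simp add: continuous_on_eq_continuous_at)
  then obtain d where "d > 0" and "\<forall>z. dist z 0 < d \<longrightarrow> dist ((g z)\<^sup>2) ((g 0)\<^sup>2) < \<delta>"
    using \<open>\<delta> > 0\<close> unfolding continuous_at_eps_delta by blast
  then have d: "norm ((g z)\<^sup>2) < \<delta>" if "norm z < d" for z
    using that assms(2) by (simp add: dist_norm)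
  define r0 where "r0 = min (min \<epsilon> d) (min 1 \<delta>)"
  show ?thesis
  proof (rule that)
    show "r0 > 0" using \<open>\<epsilon> > 0\<close> \<open>d > 0\<close> \<open>\<delta> > 0\<close> by (simp add: r0_def)
    have "ball 0 r0 \<subseteq> U" using \<open>ball 0 \<epsilon> \<subseteq> U\<close> by (auto simp: r0_def)
    then show "continuous_on (ball 0 r0) g" using \<open>continuous_on U g\<close> continuous_on_subset by blast
    fix z :: complex assume "norm z < r0"
    then have "norm z < 1" "norm z < \<delta>" "norm z < d" by (auto simp: r0_def)
    moreover have "norm (z\<^sup>2) \<le> norm z"
      using \<open>norm z < 1\<close> unfolding power2_eq_square norm_mult by (intro mult_left_le_one_le) auto
    ultimately show "norm (z\<^sup>2) \<le> \<delta> \<and> norm ((g z)\<^sup>2) \<le> \<delta>" using d[of z] by simp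
  qed
qed

theorem mainTheorem10:
  fixes g :: "complex \<Rightarrow> complex"
    and G :: "complex \<times> complex \<Rightarrow> complex"
    and F :: "complex \<times> complex \<Rightarrow> complex"
  assumes "C1_near_0 g"
    and "g 0 = 0"
    and "wirt_z g 0 = 0"
    and "wirt_zbar g 0 = 1"
    and "separate_points_near_0 (\<lambda>z. z ^ 2) (\<lambda>z. (g z) ^ 2)"
    and "holomorphic2_near_0 G"
    and "G (0, 0) = 0"
    and "\<And>w1 w2. F (w1, w2) = w2 * G (w1 ^ 2, w2 ^ 2)"
  shows "\<exists>r0>0. \<forall>r. 0 < r \<and> r < r0 \<longrightarrow>
           unif_alg (\<lambda>z. z ^ 2) (\<lambda>z. (g z + F (z, g z)) ^ 2) (cball 0 r)
         = unif_alg (\<lambda>z. z ^ 2) (\<lambda>z. (g z) ^ 2) (cball 0 r)"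
proof -
  obtain \<delta> where "\<delta> > 0" and perturbation:
    "\<And>D f u. compact D \<Longrightarrow> continuous_on D f \<Longrightarrow> continuous_on D u \<Longrightarrow>
       (\<And>z. z \<in> D \<Longrightarrow> norm (f z) \<le> \<delta> \<and> norm (u z) \<le> \<delta>) \<Longrightarrow>
       unif_alg f (\<lambda>z. u z * (1 + G (f z, u z))\<^sup>2) D = unif_alg f u D"
    using unif_alg_holomorphic_perturbation[OF assms(6,7)] by blast
  obtain r0 where "r0 > 0" and cont: "continuous_on (ball 0 r0) g"
    and small: "\<And>z. norm z < r0 \<Longrightarrow> norm (z\<^sup>2) \<le> \<delta> \<and> norm ((g z)\<^sup>2) \<le> \<delta>"
    using C1_near_0_small_near_0[OF assms(1,2) \<open>\<delta> > 0\<close>] by blast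
  have generator: "(\<lambda>z. (g z + F (z, g z)) ^ 2) = (\<lambda>z. (g z)\<^sup>2 * (1 + G (z\<^sup>2, (g z)\<^sup>2))\<^sup>2)"
    by (simp add: assms(8) power2_eq_square algebra_simps)
  have "unif_alg (\<lambda>z. z ^ 2) (\<lambda>z. (g z + F (z, g z)) ^ 2) (cball 0 r)
      = unif_alg (\<lambda>z. z ^ 2) (\<lambda>z. (g z) ^ 2) (cball 0 r)" if r: "r < r0" for r
  proof -
    have "cball 0 r \<subseteq> ball 0 r0" using r by auto
    then have "continuous_on (cball 0 r) g" using cont continuous_on_subset by blast
    moreover have "norm (z\<^sup>2) \<le> \<delta> \<and> norm ((g z)\<^sup>2) \<le> \<delta>" if "z \<in> cball 0 r" for z
      using small[of z] r that by simp
    ultimately show ?thesis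
      unfolding generator by (intro perturbation) (auto intro: continuous_intros)
  qed
  with \<open>r0 > 0\<close> show ?thesis by blast
qed

end
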